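(* Let $n\in\mathbb{Z}_{>0}$ and $m\in\mathbb{Z}_{\ge0}$. The map $\Phi=(\phi^{-1}\times\mathrm{id}_{\{0,1\}^n})\circ F\circ\phi$ is a bijection $\mathrm{SPP}(n,2m+1)\to\mathrm{eSPP}(n,m)\times\{0,1\}^n$, and its restriction to $\mathrm{SPP}(n,2m)\subseteq\mathrm{SPP}(n,2m+1)$ is a bijection from $\mathrm{SPP}(n,2m)$ onto $\{(\pi',t)\in\mathrm{eSPP}(n,m)\times\{0,1\}^n \mid t(j)=0 \text{ for all } j\notin S(\pi')\}$, i.e. onto $\bigsqcup_{\pi'\in\mathrm{eSPP}(n,m)}\{0,1\}^{S(\pi')}$.
   Context: $\mathrm{SPP}(n,M)$ is the set of shifted staircase plane partitions of size $n$ with $\pi_{1,1}\le M$: arrays $\pi=(\pi_{i,j})_{1\le i\le j\le n}$ of nonnegative integers, weakly decreasing along rows and columns where defined (these correspond to symmetric plane partitions). $\mathrm{eSPP}(n,m)=\{\pi\in\mathrm{SPP}(n,2m)\mid \pi_{i,i}\text{ even for all }i\}$, and for $\pi'\in\mathrm{eSPP}(n,m)$, $S(\pi')=\{1\le j\le n\mid \pi'_{1,j}\ne 2m\}$. Partitions have $n$ (possibly zero) parts; $\lambda\le\mu$ means $\lambda_i\le\mu_i$ for all $i$; $(k)^n=(k,\dots,k)$; $\lambda$ is even if all parts are even. $\mathrm{SSYT}(\lambda,n)$: semistandard tableaux of shape $\lambda$ with entries in $\{1,\dots,n\}$, weakly decreasing along rows and strictly decreasing down columns. The conjugation bijection $\phi\colon\mathrm{SPP}(n,M)\to\bigsqcup_{\lambda\le(M)^n}\mathrm{SSYT}(\lambda,n)$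 sends $\pi$ to the tableau of shape $(\pi_{1,1},\dots,\pi_{n,n})$ with entries $\phi(\pi)_{i,j}=\#\{i\le k\le n\mid \pi_{i,k}\ge j\}$; it maps $\mathrm{eSPP}(n,m)$ onto the tableaux of even shape $\lambda\le(2m)^n$. Row insertion $T\leftarrow x$: in the first row replace the leftmost entry $y$ strictly less than $x$ by $x$ and insert $y$ into the next row likewise; if no entry is less than $x$, append $x$ at the end of the row and stop. $F\colon\bigsqcup_{\mu\le(2m+1)^n}\mathrm{SSYT}(\mu,n)\to\bigsqcup_{\lambda\le(2m)^n\text{ even}}\mathrm{SSYT}(\lambda,n)\times\{0,1\}^n$ is defined by: for $(U,\mu)$ let $\lambda_i=2\lfloor\mu_i/2\rfloor$, let $T\in\mathrm{SSYT}(\lambda,n)$ and $x_1<\dots<x_p$ be the unique data with $U=(((T\leftarrow x_1)\leftarrow x_2)\leftarrow\cdots)\leftarrow x_p$ (unique since $\mu\setminus\lambda$ has at most one box per row), and $F(U,\mu)=((T,\lambda),t)$ with $t(i)=1$ iff $i\in\{x_1,\dots,x_p\}$. *)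

theory Defs
  imports Main
begin

definition SPP_all :: "nat \<Rightarrow> (nat \<Rightarrow> nat \<Rightarrow> nat) set" where
  "SPP_all n = {p.
     (\<forall>i j. p i j \<noteq> 0 \<longrightarrow> 1 \<le> i \<and> i \<le> j \<and> j \<le> n) \<and>
     (\<forall>i j. 1 \<le> i \<longrightarrow> i \<le> j \<longrightarrow> j < n \<longrightarrow> p i (Suc j) \<le> p i j) \<and>
     (\<forall>i j. 1 \<le> i \<longrightarrow> Suc i \<le> j \<longrightarrow> j \<le> n \<longrightarrow> p (Suc i) j \<le> p i j)}"

definition SPP :: "nat \<Rightarrow> nat \<Rightarrow> (nat \<Rightarrow> nat \<Rightarrow> nat) set" where
  "SPP n M = {p \<in> SPP_all n. p 1 1 \<le> M}"

definition eSPP :: "nat \<Rightarrow> nat \<Rightarrow> (nat \<Rightarrow> nat \<Rightarrow> nat) set" where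
  "eSPP n m = {p \<in> SPP n (2 * m). \<forall>i \<in> {1..n}. even (p i i)}"

definition S_set :: "nat \<Rightarrow> nat \<Rightarrow> (nat \<Rightarrow> nat \<Rightarrow> nat) \<Rightarrow> nat set" where
  "S_set n m p = {j \<in> {1..n}. p 1 j \<noteq> 2 * m}"

text \<open>{0,1}^n as functions on {1..n} with values in {0,1}, extended by 0.\<close>
definition binvecs :: "nat \<Rightarrow> (nat \<Rightarrow> nat) set" where
  "binvecs n = {t. \<forall>i. t i \<in> {0, 1} \<and> (t i \<noteq> 0 \<longrightarrow> 1 \<le> i \<and> i \<le> n)}"

text \<open>A tableau is a list of n rows; row i (1-based) is T!(i-1), and the
  shape is map length T.\<close>

definition is_partition :: "nat \<Rightarrow> nat list \<Rightarrow> bool" where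
  "is_partition n lam \<longleftrightarrow> length lam = n \<and> sorted_wrt (\<lambda>a b. b \<le> a) lam"

definition SSYT :: "nat list \<Rightarrow> nat \<Rightarrow> nat list list set" where
  "SSYT lam n = {T. is_partition n lam \<and> map length T = lam \<and>
     (\<forall>r \<in> set T. \<forall>x \<in> set r. 1 \<le> x \<and> x \<le> n) \<and>
     (\<forall>r \<in> set T. sorted_wrt (\<lambda>a b. b \<le> a) r) \<and>
     (\<forall>i j. Suc i < length T \<longrightarrow> j < length (T ! Suc i) \<longrightarrow>
            T ! Suc i ! j < T ! i ! j)}"

definition phi :: "nat \<Rightarrow> (nat \<Rightarrow> nat \<Rightarrow> nat) \<Rightarrow> nat list list" where
  "phi n p = map (\<lambda>i. map (\<lambda>j. card {k. i \<le> k \<and> k \<le> n \<and> j \<le> p i k}) [1..<p i i + 1])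
                 [1..<n + 1]"

definition phi_inv :: "nat \<Rightarrow> nat list list \<Rightarrow> (nat \<Rightarrow> nat \<Rightarrow> nat)" where
  "phi_inv n = the_inv_into (SPP_all n) (phi n)"

fun row_ins :: "nat list list \<Rightarrow> nat \<Rightarrow> nat list list" where
  "row_ins [] x = [[x]]"
| "row_ins (r # rs) x =
     (if \<exists>y \<in> set r. y < x
      then (let k = (LEAST k. k < length r \<and> r ! k < x)
            in r[k := x] # row_ins rs (r ! k))
      else (r @ [x]) # rs)"

definition F_map :: "nat \<Rightarrow> nat list list \<Rightarrow> nat list list \<times> (nat \<Rightarrow> nat)" where
  "F_map n U =
     (let lam = map (\<lambda>a. 2 * (a div 2)) (map length U) in
      case (THE (T, xs). T \<in> SSYT lam n \<and> sorted_wrt (<) xs \<and> set xs \<subseteq> {1..n}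
                         \<and> foldl row_ins T xs = U) of
        (T, xs) \<Rightarrow> (T, \<lambda>i. if i \<in> set xs then 1 else 0))"

definition Phi :: "nat \<Rightarrow> (nat \<Rightarrow> nat \<Rightarrow> nat) \<Rightarrow> (nat \<Rightarrow> nat \<Rightarrow> nat) \<times> (nat \<Rightarrow> nat)" where
  "Phi n p = (case F_map n (phi n p) of (T, t) \<Rightarrow> (phi_inv n T, t))"

end

(* Row insertion of a strictly increasing sequence x_1 < ... < x_p into a tableau can be carried
   out row by row: the letters bumped out of one row again form a strictly increasing sequence,
   which is inserted into the next row.  Within a row only the first letter can be appended, all
   later ones bump; so every row grows by at most one box, and reverse bumping, from the bottom
   row up, recovers the old tableau and the sequence from the new tableau and the old shape.
   Conversely, reverse bumping a tableau down to any partition shape with at most one box less in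
   each row yields a valid insertion.  With the even part of the new shape as the old shape, F is
   therefore a bijection, and so is Phi, because the conjugation phi is a bijection between
   shifted plane partitions and tableaux whose row lengths are the diagonal entries pi_{i,i}.
   For the restriction, the first row of phi pi is one box longer than that of phi pi' exactly
   when it grows under the insertion; as pi'_{1,1} is even and at most 2m, pi_{1,1} > 2m iff
   pi'_{1,1} = 2m and x_1 is at most every entry of the first row of phi pi'.  The entry in column
   c of that row counts the j with pi'_{1,j} >= c, so this happens iff pi'_{1,x} = 2m, i.e. x is
   not in S(pi'), for some inserted letter x. *)

theory Submission
  imports Defs
begin

lemma successively_iff_nth:
  "successively P xs \<longleftrightarrow> (\<forall>i. Suc i < length xs \<longrightarrow> P (xs ! i) (xs ! Suc i))"
proof (induction P xs rule: successively.induct)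
  case (3 P x y xs)
  show ?case
  proof
    assume "successively P (x # y # xs)"
    then show "\<forall>i. Suc i < length (x # y # xs) \<longrightarrow> P ((x # y # xs) ! i) ((x # y # xs) ! Suc i)"
      using "3" by (auto simp: nth_Cons split: nat.split)
  next
    assume R: "\<forall>i. Suc i < length (x # y # xs) \<longrightarrow> P ((x # y # xs) ! i) ((x # y # xs) ! Suc i)"
    have "P x y" using R[rule_format, of 0] by simp
    moreover have "successively P (y # xs)"
      unfolding "3" using R[rule_format, of "Suc _"] by simp
    ultimately show "successively P (x # y # xs)" by simp
  qed
qed simp_all

lemma length_filter_le_upt: "length (filter (\<lambda>j. j \<le> q) [1..<N + 1]) = min N q"
  by (induction N) auto

lemma filter_indicator_upt:
  assumes "sorted_wrt (<) xs" "set xs \<subseteq> {1..n}"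
  shows "filter (\<lambda>i. (if i \<in> set xs then 1 else 0) = (1::nat)) [1..<n + 1] = xs"
proof (rule sorted_distinct_set_unique)
  show "sorted (filter (\<lambda>i. (if i \<in> set xs then 1 else 0) = (1::nat)) [1..<n + 1])"
    "distinct (filter (\<lambda>i. (if i \<in> set xs then 1 else 0) = (1::nat)) [1..<n + 1])"
    using sorted_wrt_filter[OF sorted_wrt_upt] strict_sorted_iff by blast+
  show "sorted xs" "distinct xs" using assms(1) strict_sorted_iff by auto
  show "set (filter (\<lambda>i. (if i \<in> set xs then 1 else 0) = (1::nat)) [1..<n + 1]) = set xs"
    using assms(2) by auto
qed

lemma down_closed_eq_atLeastLessThan:
  assumes "S \<subseteq> {i..(n::nat)}" "\<And>k k'. k \<in> S \<Longrightarrow> i \<le> k' \<Longrightarrow> k' \<le> k \<Longrightarrow> k' \<in> S"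
  shows "S = {i..<i + card S}"
proof (cases "S = {}")
  case False
  have "finite S" using assms(1) finite_subset by blast
  then have "Max S \<in> S" "\<forall>k\<in>S. k \<le> Max S" using False by auto
  moreover have "i \<le> Max S" using calculation(1) assms(1) by auto
  ultimately have "S = {i..Max S}" using assms(1) assms(2)[OF \<open>Max S \<in> S\<close>] by fastforce
  moreover have "{i..M} = {i..<i + card {i..M}}" if "i \<le> M" for M
    using that by (simp add: atLeastLessThanSuc_atLeastAtMost)
  ultimately show ?thesis using \<open>i \<le> Max S\<close> by metis
qed simp

section \<open>Bumping in a weakly decreasing row\<close>

definition decr :: "nat list \<Rightarrow> bool" where
  "decr r \<longleftrightarrow> sorted_wrt (\<lambda>a b. b \<le> a) r"

definition count_ge :: "nat \<Rightarrow> nat list \<Rightarrow> nat" where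
  "count_ge w r = length (filter (\<lambda>a. w \<le> a) r)"

lemma decr_nth: "decr r \<Longrightarrow> i \<le> j \<Longrightarrow> j < length r \<Longrightarrow> r ! j \<le> r ! i"
  unfolding decr_def sorted_wrt_iff_nth_less by (cases "i = j") auto

lemma decrI: "(\<And>i j. i < j \<Longrightarrow> j < length r \<Longrightarrow> r ! j \<le> r ! i) \<Longrightarrow> decr r"
  unfolding decr_def sorted_wrt_iff_nth_less by auto

lemma decr_Cons: "decr (a # r) \<longleftrightarrow> (\<forall>b\<in>set r. b \<le> a) \<and> decr r"
  by (simp add: decr_def)

lemma decr_le_hd: "decr r \<Longrightarrow> z \<in> set r \<Longrightarrow> z \<le> hd r"
  by (cases r) (auto simp: decr_Cons)

lemma less_count_ge_iff: "decr r \<Longrightarrow> j < count_ge w r \<longleftrightarrow> j < length r \<and> w \<le> r ! j"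
proof (induction r arbitrary: j)
  case Nil
  then show ?case by (simp add: count_ge_def)
next
  case (Cons a r)
  then have IH: "j < count_ge w r \<longleftrightarrow> j < length r \<and> w \<le> r ! j" for j
    by (simp add: decr_Cons)
  have le_a: "(a # r) ! j \<le> a" if "j < length (a # r)" for j
    using Cons.prems that by (cases j) (auto simp: decr_Cons)
  show ?case
  proof (cases "w \<le> a")
    case True
    then show ?thesis using IH by (cases j) (auto simp: count_ge_def)
  next
    case False
    then have "count_ge w (a # r) = 0"
      using Cons.prems by (auto simp: count_ge_def decr_Cons filter_empty_conv)
    then show ?thesis using False le_a[of j] by auto
  qed
qed

lemma count_ge_le_length: "count_ge w r \<le> length r"
  by (simp add: count_ge_def)

lemma count_ge_antimono: "w \<le> w' \<Longrightarrow> count_ge w' r \<le> count_ge w r"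
  unfolding count_ge_def by (induction r) auto

lemma count_ge_Suc_0: "\<forall>a\<in>set r. 0 < a \<Longrightarrow> count_ge (Suc 0) r = length r"
  unfolding count_ge_def by (induction r) auto

lemma count_ge_eqI:
  assumes "decr r" "k \<le> length r" "\<And>j. j < length r \<Longrightarrow> j < k \<longleftrightarrow> w \<le> r ! j"
  shows "count_ge w r = k"
proof -
  have "j < count_ge w r \<longleftrightarrow> j < k" for j
    using less_count_ge_iff[OF assms(1)] assms(2,3) by (cases "j < length r") auto
  then show ?thesis by (metis less_irrefl nat_neq_iff)
qed

lemma count_ge_less_length_iff:
  assumes r: "decr r"
  shows "count_ge x r < length r \<longleftrightarrow> (\<exists>y\<in>set r. y < x)"
proof
  assume "count_ge x r < length r"
  then show "\<exists>y\<in>set r. y < x"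
    using less_count_ge_iff[OF r, of "count_ge x r" x] nth_mem by (meson less_irrefl not_le)
next
  assume "\<exists>y\<in>set r. y < x"
  then obtain j where "j < length r" "r ! j < x" by (auto simp: in_set_conv_nth)
  then show "count_ge x r < length r"
    using less_count_ge_iff[OF r, of j x] count_ge_le_length[of x r] by linarith
qed

definition bump :: "nat list \<Rightarrow> nat \<Rightarrow> nat list \<times> nat option" where
  "bump r x = (if \<exists>y\<in>set r. y < x
      then (let k = (LEAST k. k < length r \<and> r ! k < x) in (r[k := x], Some (r ! k)))
      else (r @ [x], None))"

lemma row_ins_Cons_bump:
  "row_ins (r # rs) x = (case bump r x of (r', None) \<Rightarrow> r' # rs | (r', Some y) \<Rightarrow> r' # row_ins rs y)"
  by (simp add: bump_def Let_def)

lemma bump_eq: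
  assumes r: "decr r"
  shows "bump r x = (if count_ge x r < length r
    then (r[count_ge x r := x], Some (r ! count_ge x r)) else (r @ [x], None))"
proof (cases "count_ge x r < length r")
  case True
  have "(LEAST k. k < length r \<and> r ! k < x) = count_ge x r"
  proof (rule Least_equality)
    show "count_ge x r < length r \<and> r ! count_ge x r < x"
      using True less_count_ge_iff[OF r, of "count_ge x r" x] by auto
    show "\<And>k. k < length r \<and> r ! k < x \<Longrightarrow> count_ge x r \<le> k"
      using less_count_ge_iff[OF r] by (meson leI not_le)
  qed
  then show ?thesis using True count_ge_less_length_iff[OF r] by (simp add: bump_def Let_def)
next
  case False
  then show ?thesis using count_ge_less_length_iff[OF r] by (simp add: bump_def)
qed

lemma fst_bump_nth:
  assumes "decr r" "k = count_ge x r"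
  shows "length (fst (bump r x)) = max (length r) (Suc k)"
    and "j < length (fst (bump r x)) \<Longrightarrow> fst (bump r x) ! j = (if j = k then x else r ! j)"
  using assms count_ge_le_length[of x r]
  by (auto simp: bump_eq nth_append nth_list_update)

lemma decr_bump: "decr r \<Longrightarrow> decr (fst (bump r x))"
proof (rule decrI)
  fix i j
  assume r: "decr r" and ij: "i < j" "j < length (fst (bump r x))"
  define k where "k = count_ge x r"
  have below: "i < k \<longleftrightarrow> x \<le> r ! i" if "i < length r" for i
    using less_count_ge_iff[OF r] that k_def by auto
  have "k \<le> length r" using count_ge_le_length k_def by simp
  moreover have "i < length r" using ij fst_bump_nth(1)[OF r k_def] calculation by auto
  ultimately show "fst (bump r x) ! j \<le> fst (bump r x) ! i"
    using ij fst_bump_nth[OF r k_def] below[of i] below[of j] decr_nth[OF r, of i j]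
    by (auto split: if_splits)
qed

lemma set_bump: "decr r \<Longrightarrow> set (fst (bump r x)) \<union> set_option (snd (bump r x)) \<subseteq> insert x (set r)"
  using set_update_subset_insert[of r "count_ge x r" x] by (auto simp: bump_eq)

definition bump_step :: "nat list \<times> nat list \<Rightarrow> nat \<Rightarrow> nat list \<times> nat list" where
  "bump_step = (\<lambda>(c, ys) x. case bump c x of (c', None) \<Rightarrow> (c', ys) | (c', Some y) \<Rightarrow> (c', ys @ [y]))"

definition bump_seq :: "nat list \<Rightarrow> nat list \<Rightarrow> nat list \<times> nat list" where
  "bump_seq r xs = foldl bump_step (r, []) xs"

lemma bump_seq_Nil [simp]: "bump_seq r [] = (r, [])"
  by (simp add: bump_seq_def)

lemma bump_seq_snoc: "bump_seq r (xs @ [x]) = bump_step (bump_seq r xs) x"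
  by (simp add: bump_seq_def)

lemma bump_step_eq:
  "decr c \<Longrightarrow> bump_step (c, ys) x = (if count_ge x c < length c
     then (c[count_ge x c := x], ys @ [c ! count_ge x c]) else (c @ [x], ys))"
  by (simp add: bump_step_def bump_eq)

lemma fst_bump_step: "fst (bump_step st x) = fst (bump (fst st) x)"
  by (auto simp: bump_step_def split: prod.splits option.splits)

lemma foldl_row_ins_Cons:
  "foldl row_ins (r # rs) xs = fst (bump_seq r xs) # foldl row_ins rs (snd (bump_seq r xs))"
proof (induction xs rule: rev_induct)
  case (snoc x xs)
  obtain c ys where "bump_seq r xs = (c, ys)" by fastforce
  with snoc show ?case
    by (cases "bump c x") (auto simp: bump_seq_snoc bump_step_def row_ins_Cons_bump
        simp del: row_ins.simps split: option.splits)
qed simp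

lemma decr_bump_seq: "decr r \<Longrightarrow> decr (fst (bump_seq r xs))"
  by (induction xs rule: rev_induct) (auto simp: bump_seq_snoc fst_bump_step decr_bump)

lemma set_bump_seq:
  "decr r \<Longrightarrow> set (fst (bump_seq r xs)) \<union> set (snd (bump_seq r xs)) \<subseteq> set r \<union> set xs"
proof (induction xs rule: rev_induct)
  case (snoc x xs)
  obtain c ys where cy: "bump_seq r xs = (c, ys)" by fastforce
  have "decr c" using decr_bump_seq[OF snoc.prems, of xs] cy by simp
  then have "set (fst (bump c x)) \<union> set_option (snd (bump c x)) \<subseteq> insert x (set c)"
    by (rule set_bump)
  then show ?case using snoc cy
    by (cases "bump c x") (auto simp: bump_seq_snoc bump_step_def split: option.splits)
qed simp

lemma bumped_entry_bounds:
  assumes c: "decr c" and "z \<in> set c" "z < x"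
  shows "count_ge x c < length c" and "z \<le> c ! count_ge x c" and "c ! count_ge x c < x"
proof -
  show lt: "count_ge x c < length c" using assms count_ge_less_length_iff by blast
  obtain j where j: "j < length c" "c ! j = z" using assms(2) by (auto simp: in_set_conv_nth)
  then have "count_ge x c \<le> j" using less_count_ge_iff[OF c, of j x] \<open>z < x\<close> by auto
  then show "z \<le> c ! count_ge x c" using decr_nth[OF c] j by blast
  show "c ! count_ge x c < x" using less_count_ge_iff[OF c, of "count_ge x c" x] lt by auto
qed

lemma bump_seq_sorted:
  assumes r: "decr r" and "sorted_wrt (<) xs" and "bump_seq r xs = (c, ys)"
  shows "sorted_wrt (<) ys" and "xs \<noteq> [] \<Longrightarrow> last xs \<in> set c \<and> (\<forall>y\<in>set ys. y < last xs)"
proof -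
  have "sorted_wrt (<) ys \<and> (xs \<noteq> [] \<longrightarrow> last xs \<in> set c \<and> (\<forall>y\<in>set ys. y < last xs))"
    using assms(2,3)
  proof (induction xs arbitrary: c ys rule: rev_induct)
    case (snoc x xs)
    obtain c0 ys0 where cy0: "bump_seq r xs = (c0, ys0)" by fastforce
    have xs: "sorted_wrt (<) xs" and less_x: "\<forall>a\<in>set xs. a < x"
      using snoc.prems(1) by (auto simp: sorted_wrt_append)
    have c0: "decr c0" using decr_bump_seq[OF r, of xs] cy0 by simp
    note IH = snoc.IH[OF xs cy0]
    define k where "k = count_ge x c0"
    show ?case
    proof (cases "k < length c0")
      case True
      have e: "c = c0[k := x]" "ys = ys0 @ [c0 ! k]"
        using snoc.prems(2) cy0 True by (auto simp: bump_seq_snoc bump_step_eq[OF c0] k_def)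
      have "c0 ! k < x" using less_count_ge_iff[OF c0, of k x] True k_def by simp
      moreover have "last xs \<le> c0 ! k" if "xs \<noteq> []"
        using bumped_entry_bounds(2)[OF c0, of "last xs" x] IH that less_x k_def by simp
      moreover have "ys0 = []" if "xs = []" using cy0 that by simp
      ultimately show ?thesis using IH e less_x True
        by (cases "xs = []") (auto simp: sorted_wrt_append set_update_memI)
    next
      case False
      have "xs = []"
      proof (rule ccontr)
        assume "xs \<noteq> []"
        then have "last xs \<in> set c0" "last xs < x" using IH less_x by auto
        then show False using bumped_entry_bounds(1)[OF c0] False k_def by blast
      qed
      then have "(c, ys) = bump_step (r, []) x" using snoc.prems(2) by (simp add: bump_seq_def)
      moreover have "c0 = r" using cy0 \<open>xs = []\<close> by simp
      ultimately show ?thesis using False \<open>xs = []\<close> by (simp add: bump_step_eq[OF r] k_def)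
    qed
  qed simp
  then show "sorted_wrt (<) ys" "xs \<noteq> [] \<Longrightarrow> last xs \<in> set c \<and> (\<forall>y\<in>set ys. y < last xs)"
    by blast+
qed

lemma bump_seq_snoc_bumps:
  assumes r: "decr r" and "sorted_wrt (<) (xs @ [x])" "xs \<noteq> []" "bump_seq r xs = (c, ys)"
  shows "count_ge x c < length c"
proof -
  have "last xs \<in> set c" "last xs < x"
    using bump_seq_sorted(2)[OF r _ assms(4)] assms(2,3) by (auto simp: sorted_wrt_append)
  moreover have "decr c" using decr_bump_seq[OF r, of xs] assms(4) by simp
  ultimately show ?thesis using bumped_entry_bounds(1) by blast
qed

(* For strictly increasing xs only the first letter can be appended to r; every later one bumps. *)
definition row_grows :: "nat list \<Rightarrow> nat list \<Rightarrow> bool" where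
  "row_grows r xs \<longleftrightarrow> xs \<noteq> [] \<and> (\<forall>a\<in>set r. hd xs \<le> a)"

lemma length_bump_seq:
  assumes r: "decr r" and "sorted_wrt (<) xs" and "bump_seq r xs = (c, ys)"
  shows "length c = length r + of_bool (row_grows r xs)"
    and "length ys + of_bool (row_grows r xs) = length xs"
proof -
  have "length c = length r + of_bool (row_grows r xs)
      \<and> length ys + of_bool (row_grows r xs) = length xs"
    using assms(2,3)
  proof (induction xs arbitrary: c ys rule: rev_induct)
    case (snoc x xs)
    obtain c0 ys0 where cy0: "bump_seq r xs = (c0, ys0)" by fastforce
    have c0: "decr c0" using decr_bump_seq[OF r, of xs] cy0 by simp
    show ?case
    proof (cases "xs = []")
      case True
      then have "(c, ys) = bump_step (r, []) x" using snoc.prems(2) by (simp add: bump_seq_def)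
      then show ?thesis using True count_ge_less_length_iff[OF r, of x]
        by (auto simp: bump_step_eq[OF r] row_grows_def not_less not_le split: if_splits)
    next
      case False
      have IH: "length c0 = length r + of_bool (row_grows r xs)"
        "length ys0 + of_bool (row_grows r xs) = length xs"
        using snoc.IH[OF _ cy0] snoc.prems(1) by (simp_all add: sorted_wrt_append)
      have "count_ge x c0 < length c0" using bump_seq_snoc_bumps[OF r snoc.prems(1) False cy0] .
      then have "c = c0[count_ge x c0 := x]" "ys = ys0 @ [c0 ! count_ge x c0]"
        using snoc.prems(2) by (auto simp: bump_seq_snoc cy0 bump_step_eq[OF c0])
      moreover have "row_grows r (xs @ [x]) = row_grows r xs"
        using False by (simp add: row_grows_def)
      ultimately show ?thesis using IH by simp
    qed
  qed (simp add: row_grows_def)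
  then show "length c = length r + of_bool (row_grows r xs)"
    "length ys + of_bool (row_grows r xs) = length xs"
    by blast+
qed

definition col_strict :: "nat list \<Rightarrow> nat list \<Rightarrow> bool" where
  "col_strict r s \<longleftrightarrow> length s \<le> length r \<and> (\<forall>j<length s. s ! j < r ! j)"

lemma col_strict_less_hd:
  assumes "decr r" "col_strict r s" "z \<in> set s"
  shows "r \<noteq> [] \<and> z < hd r"
proof -
  obtain j where "j < length s" "s ! j = z" using assms(3) by (auto simp: in_set_conv_nth)
  then have "j < length r" "z < r ! j" using assms(2) by (auto simp: col_strict_def)
  moreover have "r ! j \<le> hd r" using decr_le_hd[OF assms(1)] calculation(1) by simp
  ultimately show ?thesis by auto
qed

lemma count_ge_col_strict:
  assumes "col_strict r s" "decr r" "decr s"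
  shows "count_ge v s \<le> count_ge (Suc v) r"
proof (cases "count_ge v s")
  case (Suc c)
  then have "c < length s" "v \<le> s ! c" using less_count_ge_iff[OF assms(3), of c v] by auto
  then have "c < length r" "Suc v \<le> r ! c" using assms(1) by (auto simp: col_strict_def)
  then show ?thesis using less_count_ge_iff[OF assms(2), of c "Suc v"] Suc by simp
qed simp

lemma col_strict_bump:
  assumes r: "decr r" and s: "decr s" and k: "k = count_ge x r" "k < length r"
    and old: "col_strict r s"
  shows "col_strict (r[k := x]) (fst (bump s (r ! k)))"
proof -
  define y where "y = r ! k"
  define k' where "k' = count_ge y s"
  define s' where "s' = fst (bump s y)"
  have below_r: "j < k \<longleftrightarrow> x \<le> r ! j" if "j < length r" for j
    using less_count_ge_iff[OF r] k that by auto
  have "y < x" using below_r[of k] k y_def by auto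
  have k'_le: "k' \<le> length s" using count_ge_le_length k'_def by simp
  note s' = fst_bump_nth[OF s k'_def, folded s'_def]
  have "k' \<le> k"
  proof (cases "k < length s")
    case True
    then have "s ! k < y" using old y_def by (simp add: col_strict_def)
    then show ?thesis using less_count_ge_iff[OF s, of k y] k'_def by (simp add: not_less)
  qed (use k'_le in simp)
  show ?thesis unfolding col_strict_def y_def[symmetric] s'_def[symmetric]
  proof (intro conjI allI impI)
    show "length s' \<le> length (r[k := x])"
      using old s'(1) \<open>k' \<le> k\<close> k(2) by (simp add: col_strict_def)
    fix j assume j: "j < length s'"
    show "s' ! j < r[k := x] ! j"
    proof (cases "j = k'")
      case True
      have "y < r[k := x] ! k'"
      proof (cases "k' = k")
        case False
        then have "x \<le> r ! k'" using below_r[of k'] \<open>k' \<le> k\<close> k(2) by simp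
        then show ?thesis using False \<open>y < x\<close> by simp
      qed (use \<open>y < x\<close> k(2) in simp)
      then show ?thesis using True s'(2)[OF j] by simp
    next
      case False
      then have "j < length s" using j s'(1) k'_le by auto
      then have "s ! j < r ! j" using old by (simp add: col_strict_def)
      moreover have "r ! j \<le> r[k := x] ! j" using \<open>y < x\<close> y_def k(2) by (cases "j = k") auto
      ultimately show ?thesis using False s'(2)[OF j] by simp
    qed
  qed
qed

lemma col_strict_unbump:
  assumes r: "decr r" and s: "decr s" and k: "k = count_ge x r" "k < length r"
    and new: "col_strict (r[k := x]) (fst (bump s (r ! k)))"
  shows "col_strict r s"
proof -
  define y where "y = r ! k"
  define k' where "k' = count_ge y s"
  define s' where "s' = fst (bump s y)"
  note s' = fst_bump_nth[OF s k'_def, folded s'_def]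
  have new: "col_strict (r[k := x]) s'" using new by (simp add: y_def s'_def)
  have "k' \<le> k"
  proof (rule ccontr)
    assume "\<not> k' \<le> k"
    moreover have k's': "k' < length s'" using s'(1) by simp
    moreover have "k' < length r" using new k's' by (simp add: col_strict_def)
    ultimately have "r ! k' \<le> y" using decr_nth[OF r, of k k'] y_def by simp
    moreover have "s' ! k' < r[k := x] ! k'" using new k's' by (simp add: col_strict_def)
    then have "y < r[k := x] ! k'" using s'(2)[OF k's'] by simp
    ultimately show False using \<open>\<not> k' \<le> k\<close> by simp
  qed
  show ?thesis unfolding col_strict_def
  proof (intro conjI allI impI)
    show "length s \<le> length r" using new s' by (auto simp: col_strict_def)
    fix j assume j: "j < length s"
    show "s ! j < r ! j"
    proof (cases "k' \<le> j \<and> j \<le> k")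
      case True
      then show ?thesis
        using less_count_ge_iff[OF s, of j y] j k'_def decr_nth[OF r, of j k] k y_def by simp
    next
      case False
      then have "j \<noteq> k'" "j \<noteq> k" using \<open>k' \<le> k\<close> by auto
      moreover have "j < length s'" using j s'(1) by simp
      moreover have "s' ! j < r[k := x] ! j" using new calculation(3) by (simp add: col_strict_def)
      ultimately show ?thesis using s'(2)[of j] by simp
    qed
  qed
qed

lemma col_strict_bump_seq_iff:
  assumes r: "decr r" and s: "decr s" and xs: "sorted_wrt (<) xs" and "length s \<le> length r"
  shows "col_strict (fst (bump_seq r xs)) (fst (bump_seq s (snd (bump_seq r xs)))) \<longleftrightarrow> col_strict r s"
  using xs
proof (induction xs rule: rev_induct)
  case (snoc x xs)
  obtain c ys where cy: "bump_seq r xs = (c, ys)" by fastforce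
  have c: "decr c" using decr_bump_seq[OF r, of xs] cy by simp
  have d: "decr (fst (bump_seq s ys))" using decr_bump_seq[OF s] by simp
  have IH: "col_strict c (fst (bump_seq s ys)) \<longleftrightarrow> col_strict r s"
    using snoc cy by (simp add: sorted_wrt_append)
  show ?case
  proof (cases "count_ge x c < length c")
    case True
    then have "bump_seq r (xs @ [x]) = (c[count_ge x c := x], ys @ [c ! count_ge x c])"
      by (simp add: bump_seq_snoc cy bump_step_eq[OF c])
    moreover have "fst (bump_seq s (ys @ [c ! count_ge x c]))
        = fst (bump (fst (bump_seq s ys)) (c ! count_ge x c))"
      by (simp add: bump_seq_snoc fst_bump_step)
    ultimately show ?thesis
      using col_strict_bump[OF c d refl True] col_strict_unbump[OF c d refl True] IH by auto
  next
    case False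
    then have "xs = []" using bump_seq_snoc_bumps[OF r snoc.prems _ cy] by blast
    then have "c = r" "ys = []" using cy by auto
    then have "bump_seq r (xs @ [x]) = (r @ [x], [])"
      using False \<open>xs = []\<close> by (simp add: bump_seq_def bump_step_eq[OF r])
    then show ?thesis using assms(4) by (auto simp: col_strict_def nth_append)
  qed
qed simp

section \<open>Reverse bumping\<close>

(* y replaces the last entry of u that exceeds y, and that entry is returned. *)
definition unbump :: "nat list \<Rightarrow> nat \<Rightarrow> nat list \<times> nat" where
  "unbump u y = (let k = count_ge (Suc y) u - 1 in (u[k := y], u ! k))"

lemma unbump_bump:
  assumes c: "decr c" and k: "k = count_ge x c" "k < length c"
  shows "unbump (c[k := x]) (c ! k) = (c, x)"
proof -
  define u where "u = c[k := x]"
  define y where "y = c ! k"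
  have u: "decr u" using decr_bump[OF c, of x] k by (simp add: bump_eq[OF c] u_def)
  have below: "j < k \<longleftrightarrow> x \<le> c ! j" if "j < length c" for j
    using less_count_ge_iff[OF c] k that by auto
  have "y < x" using below[of k] k y_def by auto
  have "count_ge (Suc y) u = Suc k"
  proof (rule count_ge_eqI[OF u])
    show "Suc k \<le> length u" using k u_def by simp
    fix j assume j: "j < length u"
    show "j < Suc k \<longleftrightarrow> Suc y \<le> u ! j"
    proof (cases "j \<le> k")
      case True
      then show ?thesis using below[of j] \<open>y < x\<close> j u_def
        by (cases "j = k") (auto simp: nth_list_update)
    next
      case False
      then have "c ! j \<le> y" using decr_nth[OF c, of k j] j u_def y_def by simp
      then show ?thesis using False u_def by (auto simp: nth_list_update)
    qed
  qed
  then show ?thesis using k by (simp add: unbump_def u_def y_def)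
qed

lemma bump_unbump:
  assumes u: "decr u" "u \<noteq> []" "y < hd u" and e: "unbump u y = (c, x)"
  shows "decr c" and "bump c x = (u, Some y)" and "y < x" and "length c = length u"
    and "y \<in> set c" and "set c \<subseteq> insert y (set u)" and "x \<in> set u"
    and "\<forall>z\<in>set u. y < z \<longrightarrow> x \<le> z"
proof -
  define k where "k = count_ge (Suc y) u - 1"
  have "0 < count_ge (Suc y) u"
    using less_count_ge_iff[OF u(1), of 0 "Suc y"] u(2,3) by (simp add: hd_conv_nth)
  then have Suc_k: "Suc k = count_ge (Suc y) u" using k_def by simp
  then have k: "k < length u" using count_ge_le_length[of "Suc y" u] by simp
  have above: "j \<le> k \<longleftrightarrow> y < u ! j" if "j < length u" for j
    using less_count_ge_iff[OF u(1), of j "Suc y"] that unfolding Suc_k[symmetric]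
    by (simp add: Suc_le_eq less_Suc_eq_le)
  have c: "c = u[k := y]" and x: "x = u ! k" using e by (auto simp: unbump_def k_def Let_def)
  show "y < x" using above[OF k] x by simp
  show lc: "length c = length u" and "y \<in> set c" "set c \<subseteq> insert y (set u)" "x \<in> set u"
    using c x k set_update_subset_insert[of u k y] by (auto simp: set_update_memI)
  show "\<forall>z\<in>set u. y < z \<longrightarrow> x \<le> z"
    using above decr_nth[OF u(1), of _ k] k x by (auto simp: in_set_conv_nth)
  show dc: "decr c"
  proof (rule decrI)
    fix i j assume ij: "i < j" "j < length c"
    then have "j < length u" using c by simp
    then show "c ! j \<le> c ! i"
      using ij above[of i] above[of j] decr_nth[OF u(1), of i j] c k
      by (cases "j \<le> k") (auto simp: nth_list_update)
  qed
  have "count_ge x c = k"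
  proof (rule count_ge_eqI[OF dc])
    show "k \<le> length c" using c k by simp
    fix j assume j: "j < length c"
    then have "j < length u" using c by simp
    then show "j < k \<longleftrightarrow> x \<le> c ! j"
      using above[of j] \<open>y < x\<close> decr_nth[OF u(1), of j k] k c x
      by (cases "j = k") (auto simp: nth_list_update)
  qed
  then have "bump c x = (c[k := x], Some (c ! k))" using bump_eq[OF dc, of x] lc k by simp
  then show "bump c x = (u, Some y)" using c x k by simp
qed

(* Undoes bump_seq: the bumped letters ys are unbumped from the last one on, and grown records
   whether the first inserted letter was appended to the row. *)
primrec unbump_seq_rev :: "nat list \<Rightarrow> nat list \<Rightarrow> bool \<Rightarrow> nat list \<times> nat list" where
  "unbump_seq_rev u [] grown = (if grown then (butlast u, [last u]) else (u, []))"
| "unbump_seq_rev u (y # ys) grown =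
     (case unbump u y of (c, x) \<Rightarrow> case unbump_seq_rev c ys grown of (r, xs) \<Rightarrow> (r, xs @ [x]))"

definition unbump_seq :: "nat list \<Rightarrow> nat list \<Rightarrow> bool \<Rightarrow> nat list \<times> nat list" where
  "unbump_seq u ys grown = unbump_seq_rev u (rev ys) grown"

lemma unbump_seq_Nil: "unbump_seq u [] grown = (if grown then (butlast u, [last u]) else (u, []))"
  by (simp add: unbump_seq_def)

lemma unbump_seq_snoc: "unbump_seq u (ys @ [y]) grown =
   (case unbump u y of (c, x) \<Rightarrow> case unbump_seq c ys grown of (r, xs) \<Rightarrow> (r, xs @ [x]))"
  by (simp add: unbump_seq_def)

lemma unbump_seq_bump_seq:
  assumes r: "decr r" and "sorted_wrt (<) xs" and "bump_seq r xs = (u, ys)"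
  shows "unbump_seq u ys (length u = Suc (length r)) = (r, xs)"
  using assms(2,3)
proof (induction xs arbitrary: u ys rule: rev_induct)
  case Nil
  then show ?case by (auto simp: unbump_seq_Nil)
next
  case (snoc x xs)
  obtain c ys0 where cy: "bump_seq r xs = (c, ys0)" by fastforce
  have xs: "sorted_wrt (<) xs" using snoc.prems(1) by (simp add: sorted_wrt_append)
  have c: "decr c" using decr_bump_seq[OF r, of xs] cy by simp
  show ?case
  proof (cases "count_ge x c < length c")
    case True
    then have e: "u = c[count_ge x c := x]" "ys = ys0 @ [c ! count_ge x c]"
      using snoc.prems(2) by (simp_all add: bump_seq_snoc cy bump_step_eq[OF c])
    then have "unbump u (c ! count_ge x c) = (c, x)" "length u = length c"
      using unbump_bump[OF c refl True] by simp_all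
    then show ?thesis using snoc.IH[OF xs cy] e by (simp add: unbump_seq_snoc)
  next
    case False
    then have "xs = []" using bump_seq_snoc_bumps[OF r snoc.prems(1) _ cy] by blast
    then have "c = r" "ys0 = []" using cy by auto
    then have "bump_seq r (xs @ [x]) = (r @ [x], [])"
      using False \<open>xs = []\<close> by (simp add: bump_seq_def bump_step_eq[OF r])
    then show ?thesis using snoc.prems(2) \<open>xs = []\<close> by (auto simp: unbump_seq_Nil)
  qed
qed

lemma bump_seq_butlast_last:
  assumes "decr u" "u \<noteq> []"
  shows "decr (butlast u)" and "bump_seq (butlast u) [last u] = (u, [])" and "\<forall>z\<in>set u. last u \<le> z"
proof -
  have u: "butlast u @ [last u] = u" using assms(2) by simp
  then have "decr (butlast u @ [last u])" using assms(1) by simp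
  then show bl: "decr (butlast u)" and last_le: "\<forall>z\<in>set u. last u \<le> z"
    by (simp_all add: decr_def sorted_wrt_append) (metis Un_iff empty_iff empty_set le_refl
        set_ConsD set_append u)
  have "\<not> count_ge (last u) (butlast u) < length (butlast u)"
    using count_ge_less_length_iff[OF bl] last_le by (auto simp: not_less dest: in_set_butlastD)
  then show "bump_seq (butlast u) [last u] = (u, [])"
    using u by (simp add: bump_seq_def bump_step_eq[OF bl])
qed

lemma bump_seq_unbump_seq:
  assumes "decr u" and "sorted_wrt (<) ys" and "ys \<noteq> [] \<Longrightarrow> u \<noteq> [] \<and> last ys < hd u"
    and "grown \<Longrightarrow> u \<noteq> []" and "unbump_seq u ys grown = (r, xs)"
  shows "decr r" and "sorted_wrt (<) xs" and "bump_seq r xs = (u, ys)"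
    and "length r + of_bool grown = length u" and "set r \<union> set xs \<subseteq> set u \<union> set ys"
proof -
  (* The last conjunct is the invariant that keeps the recovered letters increasing. *)
  have "decr r \<and> sorted_wrt (<) xs \<and> bump_seq r xs = (u, ys) \<and> length r + of_bool grown = length u
    \<and> set r \<union> set xs \<subseteq> set u \<union> set ys
    \<and> (\<forall>a\<in>set xs. \<forall>z\<in>set u. (ys = [] \<or> last ys < z) \<longrightarrow> a \<le> z)"
    using assms
  proof (induction ys arbitrary: u r xs rule: rev_induct)
    case Nil
    show ?case
    proof (cases grown)
      case True
      then show ?thesis using bump_seq_butlast_last[OF Nil.prems(1)] Nil.prems(4,5)
        by (auto simp: unbump_seq_Nil dest: in_set_butlastD)
    next
      case False
      then show ?thesis using Nil.prems by (auto simp: unbump_seq_Nil)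
    qed
  next
    case (snoc y ys)
    obtain c x where cx: "unbump u y = (c, x)" by fastforce
    obtain r0 xs0 where rx: "unbump_seq c ys grown = (r0, xs0)" by fastforce
    have e: "r = r0" "xs = xs0 @ [x]" using snoc.prems(5) cx rx by (auto simp: unbump_seq_snoc)
    have "u \<noteq> []" "y < hd u" using snoc.prems(3) by auto
    note U = bump_unbump[OF snoc.prems(1) this cx]
    have ys: "sorted_wrt (<) ys" and less_y: "\<forall>a\<in>set ys. a < y"
      using snoc.prems(2) by (auto simp: sorted_wrt_append)
    have "y \<le> hd c" using decr_le_hd[OF U(1,5)] .
    then have "ys \<noteq> [] \<Longrightarrow> c \<noteq> [] \<and> last ys < hd c"
      using U(5) less_y by (fastforce dest: last_in_set)
    moreover have "grown \<Longrightarrow> c \<noteq> []" using U(5) by auto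
    ultimately have IH: "decr r0 \<and> sorted_wrt (<) xs0 \<and> bump_seq r0 xs0 = (c, ys)
      \<and> length r0 + of_bool grown = length c \<and> set r0 \<union> set xs0 \<subseteq> set c \<union> set ys
      \<and> (\<forall>a\<in>set xs0. \<forall>z\<in>set c. (ys = [] \<or> last ys < z) \<longrightarrow> a \<le> z)"
      using snoc.IH[OF U(1) ys _ _ rx] by blast
    have "ys = [] \<or> last ys < y" using less_y last_in_set by blast
    then have le_y: "\<forall>a\<in>set xs0. a \<le> y" using IH U(5) by blast
    have "sorted_wrt (<) (xs0 @ [x])" using IH le_y U(3) by (auto simp: sorted_wrt_append)
    moreover have "bump_seq r0 (xs0 @ [x]) = (u, ys @ [y])"
      using IH U(2) by (simp add: bump_seq_snoc bump_step_def)
    moreover have "set r0 \<union> set (xs0 @ [x]) \<subseteq> set u \<union> set (ys @ [y])" using IH U(6,7) by auto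
    moreover have "\<forall>a\<in>set (xs0 @ [x]). \<forall>z\<in>set u. y < z \<longrightarrow> a \<le> z" using le_y U(8) by fastforce
    ultimately show ?case using e IH U(4) by simp
  qed
  then show "decr r" "sorted_wrt (<) xs" "bump_seq r xs = (u, ys)"
    "length r + of_bool grown = length u" "set r \<union> set xs \<subseteq> set u \<union> set ys"
    by blast+
qed

section \<open>Row insertion into tableaux\<close>

definition semistandard :: "nat list list \<Rightarrow> bool" where
  "semistandard R \<longleftrightarrow> (\<forall>r\<in>set R. decr r \<and> (\<forall>a\<in>set r. 0 < a)) \<and> successively col_strict R"

definition tableau :: "nat \<Rightarrow> nat list list \<Rightarrow> bool" where
  "tableau n T \<longleftrightarrow> length T = n \<and> semistandard T \<and> (\<forall>a\<in>set (concat T). a \<le> n)"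

lemma semistandard_Cons:
  "semistandard (r # R) \<longleftrightarrow>
    decr r \<and> (\<forall>a\<in>set r. 0 < a) \<and> (R = [] \<or> col_strict r (hd R)) \<and> semistandard R"
  by (auto simp: semistandard_def successively_Cons)

lemma SSYT_iff_tableau: "T \<in> SSYT lam n \<longleftrightarrow> tableau n T \<and> map length T = lam"
proof -
  have "sorted_wrt (\<lambda>a b. b \<le> a) (map length T)
      \<longleftrightarrow> (\<forall>i. Suc i < length T \<longrightarrow> length (T ! Suc i) \<le> length (T ! i))"
    by (subst successively_conv_sorted_wrt[symmetric]) (auto simp: transp_def successively_iff_nth)
  then have cols: "successively col_strict T \<longleftrightarrow> sorted_wrt (\<lambda>a b. b \<le> a) (map length T)
      \<and> (\<forall>i j. Suc i < length T \<longrightarrow> j < length (T ! Suc i) \<longrightarrow> T ! Suc i ! j < T ! i ! j)"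
    by (auto simp: successively_iff_nth col_strict_def)
  have entries: "(\<forall>r\<in>set T. \<forall>x\<in>set r. 1 \<le> x \<and> x \<le> n)
      \<longleftrightarrow> (\<forall>r\<in>set T. \<forall>a\<in>set r. 0 < a) \<and> (\<forall>a\<in>set (concat T). a \<le> n)"
    by (auto simp: Suc_le_eq)
  have "T \<in> SSYT lam n \<longleftrightarrow> map length T = lam \<and> length T = n \<and> sorted_wrt (\<lambda>a b. b \<le> a) (map length T)
      \<and> (\<forall>r\<in>set T. \<forall>x\<in>set r. 1 \<le> x \<and> x \<le> n) \<and> (\<forall>r\<in>set T. decr r)
      \<and> (\<forall>i j. Suc i < length T \<longrightarrow> j < length (T ! Suc i) \<longrightarrow> T ! Suc i ! j < T ! i ! j)"
    unfolding SSYT_def is_partition_def decr_def by auto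
  moreover have "tableau n T \<longleftrightarrow> length T = n \<and> (\<forall>r\<in>set T. decr r) \<and> (\<forall>r\<in>set T. \<forall>a\<in>set r. 0 < a)
      \<and> successively col_strict T \<and> (\<forall>a\<in>set (concat T). a \<le> n)"
    unfolding tableau_def semistandard_def by auto
  ultimately show ?thesis using cols entries by blast
qed

lemma foldl_row_ins_ne: "T \<noteq> [] \<or> xs \<noteq> [] \<Longrightarrow> foldl row_ins T xs \<noteq> []"
proof (induction xs arbitrary: T)
  case (Cons x xs)
  have "row_ins T x \<noteq> []" by (cases T) (auto simp: Let_def)
  then show ?case using Cons.IH by simp
qed simp

lemma bump_seq_bumped_range:
  assumes r: "decr r" "\<forall>a\<in>set r. 0 < a" and xs: "sorted_wrt (<) xs" "set xs \<subseteq> {1..Suc L}"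
    and e: "bump_seq r xs = (u, ys)"
  shows "set ys \<subseteq> {1..L}"
proof
  fix y assume y: "y \<in> set ys"
  then have "xs \<noteq> []" using length_bump_seq(2)[OF r(1) xs(1) e] by (auto simp: row_grows_def)
  then have "y < last xs" using bump_seq_sorted(2)[OF r(1) xs(1) e] y by auto
  moreover have "last xs \<le> Suc L" using last_in_set[OF \<open>xs \<noteq> []\<close>] xs(2) by auto
  moreover have "set ys \<subseteq> set r \<union> set xs" using set_bump_seq[OF r(1), of xs] e by auto
  then have "0 < y" using y r(2) xs(2) by fastforce
  ultimately show "y \<in> {1..L}" by simp
qed

lemma bump_seq_next_row:
  assumes "semistandard (r # rs)" "sorted_wrt (<) xs" "set xs \<subseteq> {1..length (r # rs)}"
    and "bump_seq r xs = (u, ys)"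
  shows "sorted_wrt (<) ys" and "set ys \<subseteq> {1..length rs}"
proof -
  have r: "decr r" "\<forall>a\<in>set r. 0 < a" using assms(1) by (auto simp: semistandard_Cons)
  show "sorted_wrt (<) ys" using bump_seq_sorted(1)[OF r(1) assms(2,4)] .
  show "set ys \<subseteq> {1..length rs}"
    using bump_seq_bumped_range[OF r assms(2) _ assms(4)] assms(3) by simp
qed

lemma foldl_row_ins_shape:
  assumes "semistandard R" "sorted_wrt (<) xs" "set xs \<subseteq> {1..length R}"
  shows "list_all2 (\<lambda>r u. length u \<in> {length r, Suc (length r)}) R (foldl row_ins R xs)"
  using assms
proof (induction R arbitrary: xs)
  case Nil
  then show ?case by simp
next
  case (Cons r rs)
  obtain u ys where e: "bump_seq r xs = (u, ys)" by fastforce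
  have r: "decr r" and "semistandard rs" using Cons.prems(1) by (auto simp: semistandard_Cons)
  with bump_seq_next_row[OF Cons.prems e]
  have "list_all2 (\<lambda>r u. length u \<in> {length r, Suc (length r)}) rs (foldl row_ins rs ys)"
    using Cons.IH by blast
  moreover have "length u \<in> {length r, Suc (length r)}"
    using length_bump_seq(1)[OF r(1) Cons.prems(2) e] by simp
  ultimately show ?case using e by (simp add: foldl_row_ins_Cons)
qed

lemma set_concat_foldl_row_ins:
  assumes "semistandard R" "sorted_wrt (<) xs" "set xs \<subseteq> {1..length R}"
  shows "set (concat (foldl row_ins R xs)) \<subseteq> set (concat R) \<union> set xs"
  using assms
proof (induction R arbitrary: xs)
  case Nil
  then show ?case by simp
next
  case (Cons r rs)
  obtain u ys where e: "bump_seq r xs = (u, ys)" by fastforce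
  have r: "decr r" and "semistandard rs" using Cons.prems(1) by (auto simp: semistandard_Cons)
  with bump_seq_next_row[OF Cons.prems e]
  have "set (concat (foldl row_ins rs ys)) \<subseteq> set (concat rs) \<union> set ys"
    using Cons.IH by blast
  moreover have "set u \<union> set ys \<subseteq> set r \<union> set xs" using set_bump_seq[OF r(1), of xs] e by simp
  ultimately show ?case using e by (auto simp: foldl_row_ins_Cons)
qed

lemma semistandard_foldl_row_ins:
  assumes "semistandard R" "sorted_wrt (<) xs" "set xs \<subseteq> {1..length R}"
  shows "semistandard (foldl row_ins R xs)"
  using assms
proof (induction R arbitrary: xs)
  case Nil
  then show ?case by simp
next
  case (Cons r rs)
  obtain u ys where e: "bump_seq r xs = (u, ys)" by fastforce
  have r: "decr r" "\<forall>a\<in>set r. 0 < a" and rs: "semistandard rs"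
    and top: "rs = [] \<or> col_strict r (hd rs)" using Cons.prems(1) by (auto simp: semistandard_Cons)
  note ys = bump_seq_next_row(1)[OF Cons.prems e]
    and ys_range = bump_seq_next_row(2)[OF Cons.prems e]
  have "semistandard (foldl row_ins rs ys)" using Cons.IH rs ys ys_range by blast
  moreover have "decr u" using decr_bump_seq[OF r(1), of xs] e by simp
  moreover have "set u \<subseteq> set r \<union> set xs" using set_bump_seq[OF r(1), of xs] e by auto
  then have "\<forall>a\<in>set u. 0 < a" using r(2) Cons.prems(3) by fastforce
  moreover have "foldl row_ins rs ys = [] \<or> col_strict u (hd (foldl row_ins rs ys))"
  proof (cases rs)
    case (Cons s rs')
    then have "decr s" "col_strict r s" using rs top by (auto simp: semistandard_Cons)
    then show ?thesis using col_strict_bump_seq_iff[OF r(1) _ Cons.prems(2)] e Cons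
      by (auto simp: foldl_row_ins_Cons col_strict_def)
  qed (use ys_range in simp)
  ultimately show ?case using e by (simp add: foldl_row_ins_Cons semistandard_Cons)
qed

lemma length_hd_foldl_row_ins:
  "decr r \<Longrightarrow> sorted_wrt (<) xs \<Longrightarrow>
    length (hd (foldl row_ins (r # rs) xs)) = length r + of_bool (row_grows r xs)"
  using length_bump_seq(1)[of r xs "fst (bump_seq r xs)" "snd (bump_seq r xs)"]
  by (simp add: foldl_row_ins_Cons)

lemma last_mem_hd_foldl_row_ins:
  "decr r \<Longrightarrow> sorted_wrt (<) xs \<Longrightarrow> xs \<noteq> [] \<Longrightarrow> last xs \<in> set (hd (foldl row_ins (r # rs) xs))"
  using bump_seq_sorted(2)[of r xs "fst (bump_seq r xs)" "snd (bump_seq r xs)"]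
  by (simp add: foldl_row_ins_Cons)

(* lam is the shape of the tableau before the insertion. *)
fun uninsert :: "nat list list \<Rightarrow> nat list \<Rightarrow> nat list list \<times> nat list" where
  "uninsert [] lam = ([], [])"
| "uninsert (u # us) lam = (case uninsert us (tl lam) of (rs, ys) \<Rightarrow>
     case unbump_seq u ys (length u = Suc (hd lam)) of (r, xs) \<Rightarrow> (r # rs, xs))"

lemma uninsert_foldl_row_ins:
  assumes "semistandard R" "sorted_wrt (<) xs" "set xs \<subseteq> {1..length R}"
  shows "uninsert (foldl row_ins R xs) (map length R) = (R, xs)"
  using assms
proof (induction R arbitrary: xs)
  case Nil
  then show ?case by simp
next
  case (Cons r rs)
  obtain u ys where e: "bump_seq r xs = (u, ys)" by fastforce
  have r: "decr r" and "semistandard rs" using Cons.prems(1) by (auto simp: semistandard_Cons)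
  with bump_seq_next_row[OF Cons.prems e]
  have "uninsert (foldl row_ins rs ys) (map length rs) = (rs, ys)" using Cons.IH by blast
  then show ?case
    using unbump_seq_bump_seq[OF r(1) Cons.prems(2) e] e by (simp add: foldl_row_ins_Cons)
qed

lemma last_less_hd_above:
  assumes "decr u" "semistandard rs" "rs \<noteq> []" "col_strict u (hd (foldl row_ins rs ys))"
    "sorted_wrt (<) ys" "ys \<noteq> []"
  shows "u \<noteq> [] \<and> last ys < hd u"
proof -
  obtain s rs' where "rs = s # rs'" using assms(3) by (cases rs) auto
  moreover have "decr s" using assms(2) calculation by (simp add: semistandard_Cons)
  ultimately have "last ys \<in> set (hd (foldl row_ins rs ys))"
    using last_mem_hd_foldl_row_ins assms(5,6) by blast
  then show ?thesis using col_strict_less_hd[OF assms(1,4)] by blast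
qed

lemma foldl_row_ins_uninsert:
  assumes "semistandard U" "list_all2 (\<lambda>l u. length u \<in> {l, Suc l}) lam U"
    "sorted_wrt (\<lambda>a b. b \<le> a) lam" "uninsert U lam = (T, xs)"
  shows "semistandard T \<and> map length T = lam \<and> sorted_wrt (<) xs
    \<and> set (concat T) \<union> set xs \<subseteq> set (concat U) \<and> foldl row_ins T xs = U"
  using assms
proof (induction U arbitrary: lam T xs)
  case Nil
  then show ?case by simp
next
  case (Cons u us)
  obtain l ls where lam: "lam = l # ls" and l: "length u \<in> {l, Suc l}"
    and ls: "list_all2 (\<lambda>l u. length u \<in> {l, Suc l}) ls us"
    using Cons.prems(2) by (cases lam) auto
  obtain rs ys where rys: "uninsert us ls = (rs, ys)" by fastforce
  define grown where "grown = (length u = Suc l)"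
  obtain r xs' where rxs: "unbump_seq u ys grown = (r, xs')" by fastforce
  have e: "T = r # rs" "xs = xs'" using Cons.prems(4) lam rys rxs grown_def by auto
  have u: "decr u" "\<forall>a\<in>set u. 0 < a" and top: "us = [] \<or> col_strict u (hd us)"
    and us_ss: "semistandard us" using Cons.prems(1) by (auto simp: semistandard_Cons)
  have ls_sorted: "sorted_wrt (\<lambda>a b. b \<le> a) ls" and ls_le: "\<forall>b\<in>set ls. b \<le> l"
    using Cons.prems(3) lam by auto
  have rs: "semistandard rs" "map length rs = ls" and ys: "sorted_wrt (<) ys"
    and rs_ys: "set (concat rs) \<union> set ys \<subseteq> set (concat us)" and us: "foldl row_ins rs ys = us"
    using Cons.IH[OF us_ss ls ls_sorted rys] by auto
  have last_ys: "u \<noteq> [] \<and> last ys < hd u" if "ys \<noteq> []"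
  proof -
    have "us \<noteq> []" using us foldl_row_ins_ne that by blast
    then have "rs \<noteq> []" using rs(2) ls by auto
    then show ?thesis using last_less_hd_above[OF u(1) rs(1)] top us ys that \<open>us \<noteq> []\<close> by blast
  qed
  have "grown \<Longrightarrow> u \<noteq> []" using grown_def by auto
  note r = bump_seq_unbump_seq[OF u(1) ys last_ys this rxs]
  have len_r: "length r = l" using r(4) l grown_def by auto
  have "\<forall>a\<in>set r. 0 < a"
    using r(5) rs_ys Cons.prems(1) u(2) by (fastforce simp: semistandard_def)
  moreover have "rs = [] \<or> col_strict r (hd rs)"
  proof (cases rs)
    case (Cons s rs')
    have s: "decr s" and "length s \<le> length r"
      using rs Cons ls_le len_r by (auto simp: semistandard_Cons)
    moreover have "col_strict u (fst (bump_seq s ys))"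
      using top us Cons by (auto simp: foldl_row_ins_Cons)
    ultimately show ?thesis using col_strict_bump_seq_iff[OF r(1) s r(2)] r(3) Cons by simp
  qed simp
  ultimately have "semistandard T" using e r(1) rs(1) by (simp add: semistandard_Cons)
  moreover have "foldl row_ins T xs = u # us" using e r(3) us by (simp add: foldl_row_ins_Cons)
  ultimately show ?case using e r(2,5) rs rs_ys len_r lam by auto
qed

lemma tableau_foldl_row_ins:
  assumes "tableau n T" "sorted_wrt (<) xs" "set xs \<subseteq> {1..n}"
  shows "tableau n (foldl row_ins T xs)"
proof -
  have T: "semistandard T" "length T = n" "\<forall>a\<in>set (concat T). a \<le> n"
    using assms(1) by (auto simp: tableau_def)
  then have xs: "set xs \<subseteq> {1..length T}" using assms(3) by simp
  have "\<forall>a\<in>set (concat T) \<union> set xs. a \<le> n" using T(3) assms(3) by auto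
  then have "\<forall>a\<in>set (concat (foldl row_ins T xs)). a \<le> n"
    using set_concat_foldl_row_ins[OF T(1) assms(2) xs] by blast
  then show ?thesis unfolding tableau_def
    using semistandard_foldl_row_ins[OF T(1) assms(2) xs]
      list_all2_lengthD[OF foldl_row_ins_shape[OF T(1) assms(2) xs]] T(2)
    by simp
qed

lemma even_part_foldl_row_ins:
  assumes T: "tableau n T" and xs: "sorted_wrt (<) xs" "set xs \<subseteq> {1..n}"
    and even: "\<forall>r\<in>set T. even (length r)"
  shows "map length T = map (\<lambda>a. 2 * (a div 2)) (map length (foldl row_ins T xs))"
proof (rule nth_equalityI)
  have shape: "list_all2 (\<lambda>r u. length u \<in> {length r, Suc (length r)}) T (foldl row_ins T xs)"
    using foldl_row_ins_shape[of T xs] T xs by (simp add: tableau_def)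
  then show "length (map length T)
      = length (map (\<lambda>a. 2 * (a div 2)) (map length (foldl row_ins T xs)))"
    by (simp add: list_all2_lengthD)
  fix i assume i: "i < length (map length T)"
  then have "even (length (T ! i))"
    "length (foldl row_ins T xs ! i) \<in> {length (T ! i), Suc (length (T ! i))}"
    "i < length (foldl row_ins T xs)"
    using even shape by (auto simp: list_all2_conv_all_nth)
  then show "map length T ! i = map (\<lambda>a. 2 * (a div 2)) (map length (foldl row_ins T xs)) ! i"
    using i by (auto elim!: evenE)
qed

lemma foldl_row_ins_eq_iff:
  assumes "tableau n T" "sorted_wrt (<) xs" "set xs \<subseteq> {1..n}"
    and "tableau n T'" "sorted_wrt (<) xs'" "set xs' \<subseteq> {1..n}" "map length T = map length T'"
  shows "foldl row_ins T xs = foldl row_ins T' xs' \<longleftrightarrow> T = T' \<and> xs = xs'"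
proof
  assume eq: "foldl row_ins T xs = foldl row_ins T' xs'"
  have "(T, xs) = uninsert (foldl row_ins T xs) (map length T)"
    using uninsert_foldl_row_ins[of T xs] assms(1-3) by (simp add: tableau_def)
  also have "\<dots> = uninsert (foldl row_ins T' xs') (map length T')" using eq assms(7) by simp
  also have "\<dots> = (T', xs')"
    using uninsert_foldl_row_ins[of T' xs'] assms(4-6) by (simp add: tableau_def)
  finally show "T = T' \<and> xs = xs'" by simp
qed simp

lemma obtain_even_part:
  assumes U: "tableau n U"
  obtains T xs where "tableau n T" "map length T = map (\<lambda>a. 2 * (a div 2)) (map length U)"
    "sorted_wrt (<) xs" "set xs \<subseteq> {1..n}" "foldl row_ins T xs = U"
proof -
  define lam where "lam = map (\<lambda>a. 2 * (a div 2)) (map length U)"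
  obtain T xs where e: "uninsert U lam = (T, xs)" by fastforce
  have "sorted_wrt (\<lambda>a b. b \<le> a) (map length U)"
    using SSYT_iff_tableau[of U "map length U" n] U by (simp add: SSYT_def is_partition_def)
  then have "sorted_wrt (\<lambda>a b. b \<le> a) lam" unfolding lam_def
    by (simp add: sorted_wrt_map) (metis (no_types, lifting) sorted_wrt_mono_rel div_le_mono)
  moreover have "list_all2 (\<lambda>l u. length u \<in> {l, Suc l}) lam U"
    by (auto simp: lam_def list_all2_conv_all_nth)
  moreover have "semistandard U" using U by (simp add: tableau_def)
  ultimately have T: "semistandard T" "map length T = lam" "sorted_wrt (<) xs"
    "set (concat T) \<union> set xs \<subseteq> set (concat U)" "foldl row_ins T xs = U"
    using foldl_row_ins_uninsert e by blast+
  have "\<forall>a\<in>set (concat U). 0 < a \<and> a \<le> n" using U by (auto simp: tableau_def semistandard_def)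
  then have "set xs \<subseteq> {1..n}" "\<forall>a\<in>set (concat T). a \<le> n" using T(4) by fastforce+
  moreover have "length T = n"
    using map_eq_imp_length_eq[OF T(2)[unfolded lam_def]] U by (simp add: tableau_def)
  ultimately have "tableau n T" using T(1) by (simp add: tableau_def)
  then show thesis using that T \<open>set xs \<subseteq> {1..n}\<close> lam_def by blast
qed

lemma F_map_eq:
  assumes "tableau n T" "map length T = map (\<lambda>a. 2 * (a div 2)) (map length U)"
    "sorted_wrt (<) xs" "set xs \<subseteq> {1..n}" "foldl row_ins T xs = U"
  shows "F_map n U = (T, \<lambda>i. if i \<in> set xs then 1 else 0)"
proof -
  define lam where "lam = map (\<lambda>a. 2 * (a div 2)) (map length U)"
  have "(THE (T', xs'). T' \<in> SSYT lam n \<and> sorted_wrt (<) xs' \<and> set xs' \<subseteq> {1..n}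
      \<and> foldl row_ins T' xs' = U) = (T, xs)"
  proof (rule the_equality)
    show "case (T, xs) of (T', xs') \<Rightarrow> T' \<in> SSYT lam n \<and> sorted_wrt (<) xs' \<and> set xs' \<subseteq> {1..n}
        \<and> foldl row_ins T' xs' = U"
      using assms by (simp add: SSYT_iff_tableau lam_def)
  next
    fix Txs' assume *: "case Txs' of (T', xs') \<Rightarrow> T' \<in> SSYT lam n \<and> sorted_wrt (<) xs'
        \<and> set xs' \<subseteq> {1..n} \<and> foldl row_ins T' xs' = U"
    obtain T' xs' where Txs': "Txs' = (T', xs')" by fastforce
    have "tableau n T'" "map length T = map length T'" "sorted_wrt (<) xs'" "set xs' \<subseteq> {1..n}"
      "foldl row_ins T xs = foldl row_ins T' xs'"
      using * assms(2,5) by (auto simp: Txs' SSYT_iff_tableau lam_def)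
    then show "Txs' = (T, xs)" using foldl_row_ins_eq_iff[OF assms(1,3,4)] Txs' by simp
  qed
  then show ?thesis by (simp add: F_map_def lam_def Let_def)
qed

section \<open>Conjugation\<close>

lemma SPP_all_row_antimono:
  assumes "p \<in> SPP_all n" "1 \<le> i" "i \<le> k'" "k' \<le> k" "k \<le> n"
  shows "p i k \<le> p i k'"
  using assms(4,5)
proof (induction k)
  case (Suc k)
  show ?case
  proof (cases "k' = Suc k")
    case False
    then have "p i (Suc k) \<le> p i k" using assms(1-3) Suc.prems unfolding SPP_all_def by auto
    then show ?thesis using Suc False by fastforce
  qed simp
qed simp

lemma SPP_all_col_antimono: "p \<in> SPP_all n \<Longrightarrow> 1 \<le> i \<Longrightarrow> Suc i \<le> k \<Longrightarrow> k \<le> n \<Longrightarrow> p (Suc i) k \<le> p i k"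
  unfolding SPP_all_def by auto

lemma SPP_all_zero: "p \<in> SPP_all n \<Longrightarrow> \<not> (1 \<le> i \<and> i \<le> k \<and> k \<le> n) \<Longrightarrow> p i k = 0"
  unfolding SPP_all_def by auto

definition level_set :: "nat \<Rightarrow> (nat \<Rightarrow> nat \<Rightarrow> nat) \<Rightarrow> nat \<Rightarrow> nat \<Rightarrow> nat set" where
  "level_set n p i j = {k. i \<le> k \<and> k \<le> n \<and> j \<le> p i k}"

lemma phi_nth:
  "q < n \<Longrightarrow> phi n p ! q = map (\<lambda>j. card (level_set n p (Suc q) j)) [1..<p (Suc q) (Suc q) + 1]"
  unfolding phi_def level_set_def by (simp del: upt_Suc)

lemma length_phi: "length (phi n p) = n"
  by (simp add: phi_def)

lemma length_phi_nth: "q < n \<Longrightarrow> length (phi n p ! q) = p (Suc q) (Suc q)"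
  by (simp add: phi_nth del: upt_Suc)

lemma le_iff_less_card_level_set:
  assumes "p \<in> SPP_all n" "1 \<le> i" "i \<le> k" "k \<le> n"
  shows "j \<le> p i k \<longleftrightarrow> k < i + card (level_set n p i j)"
proof -
  have "level_set n p i j = {i..<i + card (level_set n p i j)}"
    by (rule down_closed_eq_atLeastLessThan[where n = n])
      (auto simp: level_set_def intro: order_trans[OF _ SPP_all_row_antimono[OF assms(1,2)]])
  moreover have "j \<le> p i k \<longleftrightarrow> k \<in> level_set n p i j" using assms by (auto simp: level_set_def)
  ultimately show ?thesis using assms(3) by (metis atLeastLessThan_iff)
qed

lemma card_level_set_le: "i \<le> n \<Longrightarrow> card (level_set n p i j) + i \<le> Suc n"
proof -
  assume "i \<le> n"
  have "card (level_set n p i j) \<le> card {i..n}" by (rule card_mono) (auto simp: level_set_def)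
  then show ?thesis using \<open>i \<le> n\<close> by simp
qed

lemma card_level_set_antimono: "j \<le> j' \<Longrightarrow> card (level_set n p i j') \<le> card (level_set n p i j)"
  by (rule card_mono[OF finite_subset[of _ "{..n}"]]) (auto simp: level_set_def)

lemma phi_row:
  assumes p: "p \<in> SPP_all n" and q: "q < n"
  shows "decr (phi n p ! q) \<and> (\<forall>a\<in>set (phi n p ! q). 0 < a \<and> a \<le> n)"
proof -
  have "decr (phi n p ! q)"
    by (rule decrI) (simp add: phi_nth[OF q] card_level_set_antimono del: upt_Suc)
  moreover have "0 < card (level_set n p (Suc q) j) \<and> card (level_set n p (Suc q) j) \<le> n"
    if "1 \<le> j" "j \<le> p (Suc q) (Suc q)" for j
  proof -
    have "Suc q \<in> level_set n p (Suc q) j" using that q by (auto simp: level_set_def)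
    then have "0 < card (level_set n p (Suc q) j)"
      using card_gt_0_iff finite_subset[of _ "{..n}"] by (fastforce simp: level_set_def)
    then show ?thesis using card_level_set_le[of "Suc q" n p j] q by simp
  qed
  ultimately show ?thesis by (auto simp: phi_nth[OF q] simp del: upt_Suc)
qed

lemma col_strict_phi:
  assumes p: "p \<in> SPP_all n" and q: "Suc q < n"
  shows "col_strict (phi n p ! q) (phi n p ! Suc q)"
  unfolding col_strict_def
proof (intro conjI allI impI)
  define i where "i = Suc q"
  have "p (Suc i) (Suc i) \<le> p i (Suc i)" "p i (Suc i) \<le> p i i"
    using SPP_all_col_antimono[OF p, of i "Suc i"] SPP_all_row_antimono[OF p, of i i "Suc i"]
      q i_def
    by auto
  then show len: "length (phi n p ! Suc q) \<le> length (phi n p ! q)"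
    using q by (simp add: length_phi_nth i_def)
  fix j0 assume j0: "j0 < length (phi n p ! Suc q)"
  define j where "j = Suc j0"
  define c where "c = card (level_set n p (Suc i) j)"
  have j: "j \<le> p (Suc i) (Suc i)" using j0 q by (simp add: length_phi_nth i_def j_def)
  have "Suc i < Suc i + c"
    using le_iff_less_card_level_set[OF p, of "Suc i" "Suc i" j] j q by (simp add: i_def c_def)
  moreover have "c + Suc i \<le> Suc n"
    using card_level_set_le[of "Suc i" n p j] q by (simp add: i_def c_def)
  ultimately have k: "Suc i \<le> i + c" "i + c \<le> n" by auto
  (* The entry c in row i + 1 says that pi_{i+1,i+c} >= j; then also pi_{i,i+c} >= j. *)
  have "j \<le> p (Suc i) (i + c)"
    using le_iff_less_card_level_set[OF p, of "Suc i" "i + c" j] k by (simp add: c_def)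
  also have "\<dots> \<le> p i (i + c)" using SPP_all_col_antimono[OF p, of i "i + c"] k by (simp add: i_def)
  finally have "c < card (level_set n p i j)"
    using le_iff_less_card_level_set[OF p, of i "i + c" j] k by (simp add: i_def)
  then show "phi n p ! Suc q ! j0 < phi n p ! q ! j0"
    using j0 len q by (simp add: phi_nth i_def j_def c_def del: upt_Suc)
qed

lemma tableau_phi:
  assumes p: "p \<in> SPP_all n"
  shows "tableau n (phi n p)"
proof -
  have rows: "decr r \<and> (\<forall>a\<in>set r. 0 < a \<and> a \<le> n)" if "r \<in> set (phi n p)" for r
    using that phi_row[OF p] by (auto simp: in_set_conv_nth length_phi)
  have "successively col_strict (phi n p)"
    unfolding successively_iff_nth using col_strict_phi[OF p] by (simp add: length_phi)
  then show ?thesis using rows by (auto simp: tableau_def semistandard_def length_phi)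
qed

definition spp_of_tableau :: "nat \<Rightarrow> nat list list \<Rightarrow> nat \<Rightarrow> nat \<Rightarrow> nat" where
  "spp_of_tableau n T i k =
    (if 1 \<le> i \<and> i \<le> k \<and> k \<le> n then count_ge (Suc (k - i)) (T ! (i - 1)) else 0)"

lemma spp_of_tableau_phi:
  assumes p: "p \<in> SPP_all n"
  shows "spp_of_tableau n (phi n p) = p"
proof (intro ext)
  fix i k
  show "spp_of_tableau n (phi n p) i k = p i k"
  proof (cases "1 \<le> i \<and> i \<le> k \<and> k \<le> n")
    case True
    then obtain q where q: "i = Suc q" "q < n" by (cases i) auto
    have "count_ge (Suc (k - i)) (phi n p ! q)
        = length (filter (\<lambda>j. Suc (k - i) \<le> card (level_set n p i j)) [1..<p i i + 1])"
      using q by (simp add: phi_nth count_ge_def filter_map comp_def del: upt_Suc)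
    also have "filter (\<lambda>j. Suc (k - i) \<le> card (level_set n p i j)) [1..<p i i + 1]
        = filter (\<lambda>j. j \<le> p i k) [1..<p i i + 1]"
    proof (rule filter_cong[OF refl])
      fix j
      show "Suc (k - i) \<le> card (level_set n p i j) \<longleftrightarrow> j \<le> p i k"
        using le_iff_less_card_level_set[OF p, of i k j] True by auto
    qed
    also have "length \<dots> = min (p i i) (p i k)"
      by (rule length_filter_le_upt)
    also have "\<dots> = p i k" using SPP_all_row_antimono[OF p, of i i k] True by simp
    finally show ?thesis using True q by (simp add: spp_of_tableau_def)
  next
    case False
    then show ?thesis using SPP_all_zero[OF p False] by (auto simp: spp_of_tableau_def)
  qed
qed

lemma tableau_entry_bound:
  assumes "tableau n T" "i < length T" "a \<in> set (T ! i)"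
  shows "a + i \<le> n"
proof -
  have "T ! i ! j + i \<le> n" if "j < length (T ! i)" for j
    using assms(2) that
  proof (induction i arbitrary: j)
    case 0
    then have "T ! 0 ! j \<in> set (concat T)" by (auto intro: nth_mem)
    then show ?case using assms(1) unfolding tableau_def by fastforce
  next
    case (Suc i)
    have "col_strict (T ! i) (T ! Suc i)"
      using assms(1) Suc.prems(1) by (simp add: tableau_def semistandard_def successively_iff_nth)
    then have "j < length (T ! i)" "T ! Suc i ! j < T ! i ! j"
      using Suc.prems(2) by (auto simp: col_strict_def)
    then show ?case using Suc.IH[of j] Suc.prems(1) by simp
  qed
  then show ?thesis using assms(3) by (auto simp: in_set_conv_nth)
qed

lemma spp_of_tableau_in_SPP_all:
  assumes T: "tableau n T"
  shows "spp_of_tableau n T \<in> SPP_all n"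
proof -
  have rows: "\<forall>r\<in>set T. decr r" using T by (simp add: tableau_def semistandard_def)
  have col: "spp_of_tableau n T (Suc i) k \<le> spp_of_tableau n T i k"
    if ik: "1 \<le> i" "Suc i \<le> k" "k \<le> n" for i k
  proof -
    obtain q where q: "i = Suc q" using ik(1) by (cases i) auto
    have len: "Suc q < length T" using T ik q by (simp add: tableau_def)
    then have "col_strict (T ! q) (T ! i)"
      using T q by (simp add: tableau_def semistandard_def successively_iff_nth)
    moreover have "decr (T ! q)" "decr (T ! i)" using rows len q by simp_all
    ultimately have "count_ge (k - i) (T ! i) \<le> count_ge (Suc (k - i)) (T ! q)"
      by (rule count_ge_col_strict)
    then show ?thesis using ik q by (simp add: spp_of_tableau_def Suc_diff_Suc)
  qed
  have row: "spp_of_tableau n T i (Suc k) \<le> spp_of_tableau n T i k"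
    if "1 \<le> i" "i \<le> k" "k < n" for i k
    using that by (simp add: spp_of_tableau_def Suc_diff_le count_ge_antimono)
  show ?thesis unfolding SPP_all_def using col row by (simp add: spp_of_tableau_def)
qed

lemma spp_of_tableau_diag:
  assumes "tableau n T" "q < n"
  shows "spp_of_tableau n T (Suc q) (Suc q) = length (T ! q)"
proof -
  have "T ! q \<in> set T" using assms by (simp add: tableau_def)
  then have "\<forall>a\<in>set (T ! q). 0 < a" using assms(1) by (simp add: tableau_def semistandard_def)
  then show ?thesis using assms(2) by (simp add: spp_of_tableau_def count_ge_Suc_0)
qed

lemma level_set_spp_of_tableau:
  assumes T: "tableau n T" and q: "q < n" and j: "j < length (T ! q)"
  shows "level_set n (spp_of_tableau n T) (Suc q) (Suc j) = {Suc q..<Suc q + T ! q ! j}"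
proof -
  have "decr (T ! q)" using T q by (simp add: tableau_def semistandard_def)
  moreover have "T ! q ! j + q \<le> n" using tableau_entry_bound[OF T] T q j by (simp add: tableau_def)
  ultimately show ?thesis
    using less_count_ge_iff[of "T ! q" j] j
    by (auto simp: level_set_def spp_of_tableau_def Suc_le_eq)
qed

lemma phi_spp_of_tableau:
  assumes T: "tableau n T"
  shows "phi n (spp_of_tableau n T) = T"
proof (rule nth_equalityI)
  show "length (phi n (spp_of_tableau n T)) = length T"
    using T by (simp add: length_phi tableau_def)
  fix q assume "q < length (phi n (spp_of_tableau n T))"
  then have q: "q < n" by (simp add: length_phi)
  show "phi n (spp_of_tableau n T) ! q = T ! q"
  proof (rule nth_equalityI)
    show len: "length (phi n (spp_of_tableau n T) ! q) = length (T ! q)"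
      using q spp_of_tableau_diag[OF T q] by (simp add: length_phi_nth)
    fix j assume "j < length (phi n (spp_of_tableau n T) ! q)"
    then have j: "j < length (T ! q)" using len by simp
    then show "phi n (spp_of_tableau n T) ! q ! j = T ! q ! j"
      using level_set_spp_of_tableau[OF T q j] spp_of_tableau_diag[OF T q] q
      by (simp add: phi_nth del: upt_Suc)
  qed
qed

lemma phi_inv_eq: "tableau n T \<Longrightarrow> phi_inv n T = spp_of_tableau n T"
  unfolding phi_inv_def
  using the_inv_into_f_eq[OF inj_on_inverseI[of _ "spp_of_tableau n"]]
    spp_of_tableau_phi phi_spp_of_tableau spp_of_tableau_in_SPP_all
  by metis

section \<open>The bijection\<close>

definition Psi :: "nat \<Rightarrow> (nat \<Rightarrow> nat \<Rightarrow> nat) \<times> (nat \<Rightarrow> nat) \<Rightarrow> nat \<Rightarrow> nat \<Rightarrow> nat" where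
  "Psi n =
    (\<lambda>(p', t). spp_of_tableau n (foldl row_ins (phi n p') (filter (\<lambda>i. t i = 1) [1..<n + 1])))"

lemma Phi_SPP_all:
  assumes p: "p \<in> SPP_all n"
  shows "fst (Phi n p) \<in> SPP_all n" and "\<forall>i\<in>{1..n}. fst (Phi n p) i i = 2 * (p i i div 2)"
    and "snd (Phi n p) \<in> binvecs n" and "Psi n (Phi n p) = p"
proof -
  obtain T xs where T: "tableau n T" "map length T = map (\<lambda>a. 2 * (a div 2)) (map length (phi n p))"
    and xs: "sorted_wrt (<) xs" "set xs \<subseteq> {1..n}" and U: "foldl row_ins T xs = phi n p"
    using obtain_even_part[OF tableau_phi[OF p]] by blast
  have Phi: "Phi n p = (spp_of_tableau n T, \<lambda>i. if i \<in> set xs then 1 else 0)"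
    using F_map_eq[OF T xs U] phi_inv_eq[OF T(1)] by (simp add: Phi_def)
  show "fst (Phi n p) \<in> SPP_all n" using spp_of_tableau_in_SPP_all[OF T(1)] Phi by simp
  show "snd (Phi n p) \<in> binvecs n" using Phi xs(2) by (auto simp: binvecs_def)
  show "Psi n (Phi n p) = p"
    using Phi phi_spp_of_tableau[OF T(1)] filter_indicator_upt[OF xs] U spp_of_tableau_phi[OF p]
    by (simp add: Psi_def)
  have "length (T ! q) = 2 * (p (Suc q) (Suc q) div 2)" if "q < n" for q
  proof -
    have "map length T ! q = map (\<lambda>a. 2 * (a div 2)) (map length (phi n p)) ! q" using T(2) by simp
    then show ?thesis using that T(1) by (simp add: tableau_def length_phi length_phi_nth)
  qed
  then show "\<forall>i\<in>{1..n}. fst (Phi n p) i i = 2 * (p i i div 2)"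
    using Phi spp_of_tableau_diag[OF T(1)] by (auto simp: Suc_le_eq gr0_conv_Suc)
qed

lemma Phi_Psi:
  assumes p': "p' \<in> SPP_all n" "\<forall>i\<in>{1..n}. even (p' i i)" and t: "t \<in> binvecs n"
  shows "Psi n (p', t) \<in> SPP_all n" and "Phi n (Psi n (p', t)) = (p', t)"
    and "0 < n \<Longrightarrow> Psi n (p', t) 1 1
      = p' 1 1 + of_bool (row_grows (phi n p' ! 0) (filter (\<lambda>i. t i = 1) [1..<n + 1]))"
proof -
  define T where "T = phi n p'"
  define xs where "xs = filter (\<lambda>i. t i = 1) [1..<n + 1]"
  define U where "U = foldl row_ins T xs"
  have T: "tableau n T" using tableau_phi[OF p'(1)] T_def by simp
  have xs: "sorted_wrt (<) xs" "set xs \<subseteq> {1..n}"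
    unfolding xs_def by (auto intro: sorted_wrt_filter simp del: upt_Suc)
  have U: "tableau n U" using tableau_foldl_row_ins[OF T xs] U_def by simp
  have Psi: "Psi n (p', t) = spp_of_tableau n U" by (simp add: Psi_def T_def xs_def U_def)
  show "Psi n (p', t) \<in> SPP_all n" using spp_of_tableau_in_SPP_all[OF U] Psi by simp
  have "\<forall>r\<in>set T. even (length r)"
    using p'(2) by (auto simp: T_def in_set_conv_nth length_phi length_phi_nth)
  then have "map length T = map (\<lambda>a. 2 * (a div 2)) (map length U)"
    using even_part_foldl_row_ins[OF T xs] U_def by simp
  then have "F_map n U = (T, \<lambda>i. if i \<in> set xs then 1 else 0)"
    using F_map_eq[OF T _ xs] U_def by simp
  moreover have "(\<lambda>i. if i \<in> set xs then 1 else 0) = t"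
  proof
    fix i
    have "t i \<in> {0, 1}" "t i \<noteq> 0 \<longrightarrow> 1 \<le> i \<and> i \<le> n" using t by (auto simp: binvecs_def)
    then show "(if i \<in> set xs then 1 else 0) = t i" by (auto simp: xs_def)
  qed
  ultimately show "Phi n (Psi n (p', t)) = (p', t)"
    using Psi phi_spp_of_tableau[OF U] phi_inv_eq[OF T] spp_of_tableau_phi[OF p'(1)]
    by (simp add: Phi_def T_def)
  assume "0 < n"
  then obtain r rs where "T = r # rs" using T by (cases T) (auto simp: tableau_def)
  moreover have "decr r" using T calculation by (simp add: tableau_def semistandard_def)
  ultimately show "Psi n (p', t) 1 1 = p' 1 1 + of_bool (row_grows (phi n p' ! 0) xs)"
    using spp_of_tableau_diag[OF U \<open>0 < n\<close>] length_hd_foldl_row_ins[OF _ xs(1)] Psi U_def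
      length_phi_nth[OF \<open>0 < n\<close>, of p'] T_def foldl_row_ins_ne
    by (simp add: hd_conv_nth)
qed

lemma row_grows_phi_iff:
  assumes p: "p \<in> SPP_all n" and n: "0 < n" and "p 1 1 \<le> M"
    and xs: "sorted_wrt (<) xs" "set xs \<subseteq> {1..n}"
  shows "row_grows (phi n p ! 0) xs \<and> p 1 1 = M \<longleftrightarrow> (\<exists>j\<in>set xs. p 1 j = M)"
proof
  have row: "set (phi n p ! 0) = (\<lambda>c. card (level_set n p 1 c)) ` {1..p 1 1}"
    using phi_nth[OF n, of p] by (auto simp del: upt_Suc)
  have le_p11: "p 1 j \<le> p 1 1" if "j \<in> set xs" for j
    using SPP_all_row_antimono[OF p, of 1 1 j] that xs(2) by auto
  have le_iff: "c \<le> p 1 j \<longleftrightarrow> j \<le> card (level_set n p 1 c)" if "j \<in> set xs" for j c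
    using le_iff_less_card_level_set[OF p, of 1 j c] that xs(2) by auto
  have hd_le: "hd xs \<le> j" if "j \<in> set xs" for j
    using xs(1) that by (cases xs) auto
  show "\<exists>j\<in>set xs. p 1 j = M" if "row_grows (phi n p ! 0) xs \<and> p 1 1 = M"
  proof
    have hd: "hd xs \<in> set xs" using that by (simp add: row_grows_def)
    show "p 1 (hd xs) = M"
    proof (cases "M = 0")
      case False
      then have "hd xs \<le> card (level_set n p 1 M)" using that row by (auto simp: row_grows_def)
      then have "M \<le> p 1 (hd xs)" using le_iff[OF hd] by simp
      then show ?thesis using le_p11[OF hd] that by simp
    qed (use le_p11[OF hd] that in simp)
  qed (use that in \<open>simp add: row_grows_def\<close>)
  show "row_grows (phi n p ! 0) xs \<and> p 1 1 = M" if "\<exists>j\<in>set xs. p 1 j = M"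
  proof -
    from that obtain j where j: "j \<in> set xs" "p 1 j = M" by blast
    then have "p 1 1 = M" using le_p11 \<open>p 1 1 \<le> M\<close> by fastforce
    moreover have "hd xs \<le> a" if "a \<in> set (phi n p ! 0)" for a
      using that row le_iff[OF j(1)] hd_le[OF j(1)] j(2) calculation by auto
    ultimately show ?thesis using j(1) by (auto simp: row_grows_def)
  qed
qed

lemma Psi_in_SPP:
  assumes n: "0 < n" and p': "p' \<in> eSPP n m" and t: "t \<in> binvecs n"
  shows "Psi n (p', t) \<in> SPP n (2 * m + 1)"
    and "Psi n (p', t) \<in> SPP n (2 * m) \<longleftrightarrow> (\<forall>j\<in>{1..n}. j \<notin> S_set n m p' \<longrightarrow> t j = 0)"
proof -
  have P: "p' \<in> SPP_all n" "\<forall>i\<in>{1..n}. even (p' i i)" "p' 1 1 \<le> 2 * m"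
    using p' by (auto simp: eSPP_def SPP_def)
  define xs where "xs = filter (\<lambda>i. t i = 1) [1..<n + 1]"
  have xs: "sorted_wrt (<) xs" "set xs \<subseteq> {1..n}"
    unfolding xs_def by (auto intro: sorted_wrt_filter simp del: upt_Suc)
  note Psi = Phi_Psi(1)[OF P(1,2) t] Phi_Psi(3)[OF P(1,2) t n, folded xs_def]
  show "Psi n (p', t) \<in> SPP n (2 * m + 1)" using Psi P(3) by (simp add: SPP_def)
  have "even (p' 1 1)" using P(2) n by simp
  then have "Psi n (p', t) \<in> SPP n (2 * m) \<longleftrightarrow> \<not> (row_grows (phi n p' ! 0) xs \<and> p' 1 1 = 2 * m)"
    using Psi P(3) by (auto simp: SPP_def elim!: evenE)
  also have "\<dots> \<longleftrightarrow> \<not> (\<exists>j\<in>set xs. p' 1 j = 2 * m)"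
    using row_grows_phi_iff[OF P(1) n P(3) xs] by simp
  also have "\<dots> \<longleftrightarrow> (\<forall>j\<in>{1..n}. j \<notin> S_set n m p' \<longrightarrow> t j = 0)"
  proof -
    have "set xs = {j \<in> {1..n}. t j = 1}" by (auto simp: xs_def)
    moreover have "t j = 0 \<longleftrightarrow> t j \<noteq> 1" for j using t by (auto simp: binvecs_def)
    ultimately show ?thesis by (auto simp: S_set_def)
  qed
  finally show "Psi n (p', t) \<in> SPP n (2 * m) \<longleftrightarrow> (\<forall>j\<in>{1..n}. j \<notin> S_set n m p' \<longrightarrow> t j = 0)" .
qed

lemma Phi_in_eSPP:
  assumes "0 < n" "p \<in> SPP n (2 * m + 1)"
  shows "Phi n p \<in> eSPP n m \<times> binvecs n"
proof -
  have p: "p \<in> SPP_all n" "p 1 1 \<le> 2 * m + 1" using assms(2) by (auto simp: SPP_def)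
  note Phi = Phi_SPP_all[OF p(1)]
  have "fst (Phi n p) 1 1 \<le> 2 * m" using Phi(2) p(2) assms(1) by auto
  then show ?thesis using Phi(1-3) by (cases "Phi n p") (auto simp: eSPP_def SPP_def)
qed

lemma Phi_in_restricted:
  assumes "0 < n" "p \<in> SPP n (2 * m)"
  shows "Phi n p \<in> {(p', t) \<in> eSPP n m \<times> binvecs n. \<forall>j \<in> {1..n}. j \<notin> S_set n m p' \<longrightarrow> t j = 0}"
proof -
  obtain p' t where pt: "Phi n p = (p', t)" by fastforce
  have "p \<in> SPP n (2 * m + 1)" "p \<in> SPP_all n" using assms(2) by (auto simp: SPP_def)
  then have "(p', t) \<in> eSPP n m \<times> binvecs n" "Psi n (p', t) = p"
    using Phi_in_eSPP[OF assms(1)] Phi_SPP_all(4) pt by metis+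
  then show ?thesis using Psi_in_SPP(2)[OF assms(1)] assms(2) pt by auto
qed

theorem mainTheorem5:
  fixes n m :: nat
  assumes "0 < n"
  shows "bij_betw (Phi n) (SPP n (2 * m + 1)) (eSPP n m \<times> binvecs n) \<and>
         bij_betw (Phi n) (SPP n (2 * m))
           {(p', t) \<in> eSPP n m \<times> binvecs n. \<forall>j \<in> {1..n}. j \<notin> S_set n m p' \<longrightarrow> t j = 0}"
proof -
  let ?R = "{(p', t) \<in> eSPP n m \<times> binvecs n. \<forall>j \<in> {1..n}. j \<notin> S_set n m p' \<longrightarrow> t j = 0}"
  have Psi_Phi: "Psi n (Phi n p) = p" if "p \<in> SPP n M" for p M
    using Phi_SPP_all(4) that by (simp add: SPP_def)
  have Phi_Psi: "Phi n (Psi n pt) = pt" if "pt \<in> eSPP n m \<times> binvecs n" for pt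
    using Phi_Psi(2) that by (auto simp: eSPP_def SPP_def)
  have "bij_betw (Phi n) (SPP n (2 * m + 1)) (eSPP n m \<times> binvecs n)"
  proof (rule bij_betw_byWitness[where f' = "Psi n"])
    show "Phi n ` SPP n (2 * m + 1) \<subseteq> eSPP n m \<times> binvecs n"
      by (rule image_subsetI) (rule Phi_in_eSPP[OF assms])
  qed (use Psi_Phi Phi_Psi Psi_in_SPP(1)[OF assms] in auto)
  moreover have "bij_betw (Phi n) (SPP n (2 * m)) ?R"
  proof (rule bij_betw_byWitness[where f' = "Psi n"])
    show "Phi n ` SPP n (2 * m) \<subseteq> ?R" by (rule image_subsetI) (rule Phi_in_restricted[OF assms])
  qed (use Psi_Phi Phi_Psi Psi_in_SPP(2)[OF assms] in auto)
  ultimately show ?thesis ..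
qed

end
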